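(* Let $n\ge r\ge 1$ and let $Q=(q_{ij})\in\mathcal P_r(n)$. Then \[ \sum_{1\le i<j\le n}\min(q_{ij},0)\ \ge\ -\frac{\beta_r\, n}{4}. \]
   Context: For integers $N\ge r\ge 1$, let $\mathcal P_r(N)=\{Q\in\mathbb R^{N\times N}: Q^2=Q,\ Q^T=Q,\ \operatorname{rank}Q=r\}$ be the set of rank-$r$ orthogonal projections. Define \[ \beta_r(N)=\frac1N\max_{Q\in\mathcal P_r(N)}\sum_{i,j=1}^N |q_{ij}|,\qquad \beta_r=\sup_{N\ge r}\beta_r(N), \] where $Q=(q_{ij})$. *)

theory Defs
  imports Complex_Main "Jordan_Normal_Form.DL_Rank"
begin

definition proj_set :: "nat \<Rightarrow> nat \<Rightarrow> real mat set" where
  "proj_set r N = {Q. Q \<in> carrier_mat N N \<and> Q * Q = Q \<and> transpose_mat Q = Q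
                      \<and> vec_space.rank N Q = r}"

text \<open>beta_r(N) = (1/N) max over Q in P_r(N) of sum_{i,j} |q_ij|; the maximum is attained
  (compact set), so it equals the supremum used here.\<close>
definition beta_N :: "nat \<Rightarrow> nat \<Rightarrow> real" where
  "beta_N r N = (1 / real N) * Sup ((\<lambda>Q. \<Sum>i<N. \<Sum>j<N. \<bar>Q $$ (i, j)\<bar>) ` proj_set r N)"

definition beta :: "nat \<Rightarrow> real" where
  "beta r = Sup (beta_N r ` {N. r \<le> N})"

end

(*
  Since min x 0 = (x - |x|) / 2, the sum of min (q_ij) 0 over all (i, j) equals
  (sum_ij q_ij - sum_ij |q_ij|) / 2. The diagonal contributes nothing, as
  q_ii = sum_k q_ik^2 >= 0, so by symmetry this full sum is twice the sum over i < j.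
  As Q = Q^T Q, the entry sum sum_ij q_ij = |Q (1,...,1)|^2 is nonnegative, and
  sum_ij |q_ij| <= beta_r n.
  For the last inequality beta_r must be a genuine supremum: by AM-GM and
  trace Q = rank Q = r one has sum_ij |q_ij| <= N (1 + r) / 2, so beta_r(N) <= (1 + r) / 2.
*)
theory Submission
  imports Defs
begin

lemma (in vec_space) cols_subset_span_maximal_indpt:
  assumes A: "A \<in> carrier_mat n nc"
    and max: "maximal S (\<lambda>T. T \<subseteq> set (cols A) \<and> lin_indpt T)"
  shows "set (cols A) \<subseteq> span S"
proof
  fix a assume a: "a \<in> set (cols A)"
  have SA: "S \<subseteq> set (cols A)" and indpt: "lin_indpt S"
    using max unfolding maximal_def by auto
  have S_carrier: "S \<subseteq> carrier_vec n"
    using SA cols_dim A by (metis carrier_matD(1) subset_trans)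
  show "a \<in> span S"
  proof (cases "a \<in> S")
    case True
    then show ?thesis using span_mem S_carrier by auto
  next
    case False
    have "\<not> lin_indpt (insert a S)"
      using max a SA False unfolding maximal_def by (metis insert_subset subset_insertI)
    moreover have "a \<in> carrier_vec n"
      using a A cols_dim by (metis carrier_matD(1) subsetD)
    ultimately show ?thesis
      using lin_dep_iff_in_span[OF S_carrier indpt _ False] by auto
  qed
qed

lemma (in vec_space) rank_factorization:
  assumes A: "A \<in> carrier_mat n nc"
  obtains B C where "B \<in> carrier_mat n (rank A)" "C \<in> carrier_mat (rank A) nc" "A = B * C"
    and "set (cols B) \<subseteq> set (cols A)"
    and "\<And>v. v \<in> carrier_vec (rank A) \<Longrightarrow> B *\<^sub>v v = 0\<^sub>v n \<Longrightarrow> v = 0\<^sub>v (rank A)"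
proof -
  obtain S where max: "maximal S (\<lambda>T. T \<subseteq> set (cols A) \<and> lin_indpt T)"
    using maximal_exists[of "\<lambda>T. T \<subseteq> set (cols A) \<and> lin_indpt T" "card (set (cols A))" "{}"]
    by (meson List.finite_set card_mono empty_iff empty_subsetI finite_lin_indpt2 rev_finite_subset)
  have SA: "S \<subseteq> set (cols A)" and indpt: "lin_indpt S"
    using max unfolding maximal_def by auto
  have S_carrier: "S \<subseteq> carrier_vec n"
    using SA cols_dim A by (metis carrier_matD(1) subset_trans)
  have finS: "finite S" using SA finite_subset by blast
  obtain ss where ss: "set ss = S" "distinct ss" using finite_distinct_list[OF finS] by blast
  have len: "length ss = rank A"
    using rank_card_indpt[OF A max] ss distinct_card by fastforce
  define B where "B = mat_of_cols n ss"
  have B: "B \<in> carrier_mat n (rank A)" unfolding B_def using len by auto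
  have colsB: "cols B = ss" unfolding B_def using ss S_carrier by (simp add: cols_mat_of_cols)
  have "\<exists>c \<in> carrier_vec (rank A). B *\<^sub>v c = col A j" if j: "j < nc" for j
  proof -
    have "col A j \<in> span S"
      using cols_subset_span_maximal_indpt[OF A max] j A by (auto simp: cols_def)
    then obtain a where a: "lincomb a S = col A j"
      using finite_in_span[OF finS S_carrier] by auto
    have "B *\<^sub>v vec (rank A) (\<lambda>i. a (col B i)) = lincomb a S"
      using mat_mult_eq_lincomb[OF B] colsB ss by simp
    then show ?thesis using a by auto
  qed
  then obtain c where c: "\<And>j. j < nc \<Longrightarrow> c j \<in> carrier_vec (rank A) \<and> B *\<^sub>v c j = col A j"
    by metis
  define C where "C = mat (rank A) nc (\<lambda>(k, j). c j $ k)"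
  have C: "C \<in> carrier_mat (rank A) nc" unfolding C_def by auto
  have "A = B * C"
  proof (rule mat_col_eqI)
    fix j assume "j < dim_col (B * C)"
    then have j: "j < nc" using C by simp
    have "col C j = c j" using c[OF j] j unfolding C_def by (auto simp: col_mat)
    then show "col A j = col (B * C) j" using c[OF j] col_mult2[OF B C j] by metis
  qed (use A B C in auto)
  moreover have "v = 0\<^sub>v (rank A)" if "v \<in> carrier_vec (rank A)" "B *\<^sub>v v = 0\<^sub>v n" for v
    using lin_depI[OF B that(1) _ that(2)] indpt colsB ss by auto
  ultimately show thesis
    using that B C SA colsB ss by auto
qed

lemma trace_mult_comm:
  fixes B C :: "'a::comm_ring_1 mat"
  assumes B: "B \<in> carrier_mat n r" and C: "C \<in> carrier_mat r n"
  shows "(\<Sum>i<n. (B * C) $$ (i, i)) = (\<Sum>k<r. (C * B) $$ (k, k))"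
proof -
  have "(\<Sum>i<n. (B * C) $$ (i, i)) = (\<Sum>i<n. \<Sum>k<r. B $$ (i, k) * C $$ (k, i))"
    using B C by (auto simp: scalar_prod_def lessThan_atLeast0 intro!: sum.cong)
  also have "\<dots> = (\<Sum>k<r. \<Sum>i<n. C $$ (k, i) * B $$ (i, k))"
    by (subst sum.swap) (simp add: mult.commute)
  also have "\<dots> = (\<Sum>k<r. (C * B) $$ (k, k))"
    using B C by (auto simp: scalar_prod_def lessThan_atLeast0 intro!: sum.cong)
  finally show ?thesis .
qed

lemma (in vec_space) idempotent_trace_eq_rank:
  assumes A: "A \<in> carrier_mat n n" and idem: "A * A = A"
  shows "(\<Sum>i<n. A $$ (i, i)) = of_nat (rank A)"
proof -
  obtain B C where B: "B \<in> carrier_mat n (rank A)" and C: "C \<in> carrier_mat (rank A) n"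
    and BC: "A = B * C" and colsB: "set (cols B) \<subseteq> set (cols A)"
    and inj: "\<And>v. v \<in> carrier_vec (rank A) \<Longrightarrow> B *\<^sub>v v = 0\<^sub>v n \<Longrightarrow> v = 0\<^sub>v (rank A)"
    using rank_factorization[OF A] by blast
  have AB: "A * B = B"
  proof (rule mat_col_eqI)
    fix k assume "k < dim_col B"
    then have k: "k < rank A" using B by simp
    obtain p where p: "p < n" "col B k = col A p"
      using colsB A k B by (metis cols_length cols_nth carrier_matD(2) in_set_conv_nth nth_mem subsetD)
    have "col (A * B) k = A *\<^sub>v col A p" using col_mult2[OF A B k] p by simp
    also have "\<dots> = col B k" using col_mult2[OF A A p(1)] idem p by simp
    finally show "col (A * B) k = col B k" .
  qed (use A B in auto)
  have "C * B = 1\<^sub>m (rank A)"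
  proof (rule mat_col_eqI)
    fix k assume "k < dim_col (1\<^sub>m (rank A))"
    then have k: "k < rank A" by simp
    have "B *\<^sub>v col (C * B) k = col (B * (C * B)) k"
      using B C k by (metis col_mult2 mult_carrier_mat)
    also have "B * (C * B) = B * 1\<^sub>m (rank A)"
      using AB BC assoc_mult_mat[OF B C B] B by simp
    also have "col \<dots> k = B *\<^sub>v col (1\<^sub>m (rank A)) k"
      using B k by (metis col_mult2 one_carrier_mat)
    finally have "B *\<^sub>v col (C * B) k = B *\<^sub>v col (1\<^sub>m (rank A)) k" .
    then have "B *\<^sub>v (col (C * B) k - col (1\<^sub>m (rank A)) k) = 0\<^sub>v n"
      using B C k by (subst mult_minus_distrib_mat_vec) auto
    then have "col (C * B) k - col (1\<^sub>m (rank A)) k = 0\<^sub>v (rank A)"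
      using inj B C k by auto
    then show "col (C * B) k = col (1\<^sub>m (rank A)) k"
      using B C k by (auto simp: vec_eq_iff)
  qed (use B C in auto)
  then show ?thesis
    using trace_mult_comm[OF B C] BC by simp
qed

lemma symmetric_idempotent_diag_eq_sum_squares:
  fixes A :: "'a::comm_ring_1 mat"
  assumes A: "A \<in> carrier_mat n n" and sym: "transpose_mat A = A" and idem: "A * A = A"
    and i: "i < n"
  shows "A $$ (i, i) = (\<Sum>k<n. (A $$ (i, k))\<^sup>2)"
proof -
  have "A $$ (i, i) = (A * A) $$ (i, i)" using idem by simp
  also have "\<dots> = (\<Sum>k<n. A $$ (i, k) * A $$ (k, i))"
    using i A by (auto simp: scalar_prod_def lessThan_atLeast0 intro!: sum.cong)
  also have "\<dots> = (\<Sum>k<n. (A $$ (i, k))\<^sup>2)"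
    using i A sym by (auto simp: power2_eq_square intro!: sum.cong) (metis carrier_matD index_transpose_mat(1))
  finally show ?thesis .
qed

lemma symmetric_idempotent_entry_sum_nonneg:
  fixes A :: "'a::linordered_idom mat"
  assumes A: "A \<in> carrier_mat n n" and sym: "transpose_mat A = A" and idem: "A * A = A"
  shows "0 \<le> (\<Sum>i<n. \<Sum>j<n. A $$ (i, j))"
proof -
  have sym_entry: "A $$ (k, i) = A $$ (i, k)" if "k < n" "i < n" for k i
    using that A sym by (metis carrier_matD index_transpose_mat(1))
  have "(\<Sum>i<n. \<Sum>j<n. A $$ (i, j)) = (\<Sum>i<n. \<Sum>j<n. (A * A) $$ (i, j))"
    using idem by simp
  also have "\<dots> = (\<Sum>i<n. \<Sum>j<n. \<Sum>k<n. A $$ (k, i) * A $$ (k, j))"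
    using A sym_entry by (auto simp: scalar_prod_def lessThan_atLeast0 intro!: sum.cong)
  also have "\<dots> = (\<Sum>i<n. \<Sum>k<n. \<Sum>j<n. A $$ (k, i) * A $$ (k, j))"
    by (rule sum.cong[OF refl], rule sum.swap)
  also have "\<dots> = (\<Sum>k<n. \<Sum>i<n. \<Sum>j<n. A $$ (k, i) * A $$ (k, j))"
    by (rule sum.swap)
  also have "\<dots> = (\<Sum>k<n. (\<Sum>i<n. A $$ (k, i))\<^sup>2)"
    by (simp add: power2_eq_square sum_product)
  finally show ?thesis by (simp add: sum_nonneg)
qed

lemma sum_symmetric_eq_twice_strict_upper:
  fixes f :: "nat \<Rightarrow> nat \<Rightarrow> 'a::comm_semiring_1"
  assumes "\<And>i j. i < n \<Longrightarrow> j < n \<Longrightarrow> f i j = f j i"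
    and "\<And>i. i < n \<Longrightarrow> f i i = 0"
  shows "(\<Sum>i<n. \<Sum>j<n. f i j) = 2 * (\<Sum>i<n. \<Sum>j\<in>{i<..<n}. f i j)"
  using assms
proof (induction n)
  case 0
  then show ?case by simp
next
  case (Suc n)
  have upper: "{i<..<Suc n} = insert n {i<..<n}" if "i < n" for i
    using that by auto
  have "{n<..<Suc n} = {}" by auto
  have upper_sum: "(\<Sum>i<Suc n. \<Sum>j\<in>{i<..<Suc n}. f i j)
      = (\<Sum>i<n. f i n) + (\<Sum>i<n. \<Sum>j\<in>{i<..<n}. f i j)"
    using \<open>{n<..<Suc n} = {}\<close> by (auto simp: upper sum.distrib intro!: sum.cong)
  have full_sum: "(\<Sum>i<Suc n. \<Sum>j<Suc n. f i j) = (\<Sum>i<n. \<Sum>j<n. f i j) + 2 * (\<Sum>i<n. f i n)"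
    using Suc.prems by (simp add: sum.distrib mult_2 add_ac)
  show ?case
    using upper_sum full_sum Suc by (simp add: distrib_left add.commute)
qed

lemma proj_set_abs_entry_sum_le:
  assumes Q: "Q \<in> proj_set r N" and N: "0 < N"
  shows "(\<Sum>i<N. \<Sum>j<N. \<bar>Q $$ (i, j)\<bar>) \<le> real N * (1 + real r) / 2"
proof -
  have Q_carrier: "Q \<in> carrier_mat N N" and sym: "transpose_mat Q = Q" and idem: "Q * Q = Q"
    and rank: "vec_space.rank N Q = r"
    using Q unfolding proj_set_def by auto
  have am_gm: "\<bar>x\<bar> \<le> (1 / real N + real N * x\<^sup>2) / 2" for x :: real
  proof -
    have "0 \<le> (real N * \<bar>x\<bar> - 1)\<^sup>2" by simp
    then show ?thesis using N by (simp add: field_simps power2_eq_square)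
  qed
  have "(\<Sum>i<N. \<Sum>j<N. \<bar>Q $$ (i, j)\<bar>) \<le> (\<Sum>i<N. \<Sum>j<N. (1 / real N + real N * (Q $$ (i, j))\<^sup>2) / 2)"
    by (intro sum_mono am_gm)
  also have "\<dots> = (\<Sum>i<N. (1 + real N * (\<Sum>j<N. (Q $$ (i, j))\<^sup>2)) / 2)"
    using N by (simp add: sum.distrib sum_divide_distrib[symmetric] sum_distrib_left)
  also have "\<dots> = (\<Sum>i<N. (1 + real N * Q $$ (i, i)) / 2)"
    using symmetric_idempotent_diag_eq_sum_squares[OF Q_carrier sym idem] by simp
  also have "\<dots> = (real N + real N * (\<Sum>i<N. Q $$ (i, i))) / 2"
    by (simp add: sum.distrib sum_divide_distrib[symmetric] sum_distrib_left)
  also have "\<dots> = real N * (1 + real r) / 2"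
    using vec_space.idempotent_trace_eq_rank[OF Q_carrier idem] rank by (simp add: algebra_simps)
  finally show ?thesis .
qed

lemma bdd_above_beta_N: "bdd_above (beta_N r ` {N. 0 < N})"
proof -
  \<comment> \<open>For empty proj_set r N the value Sup {} / N is an unspecified real, bounded by its modulus.\<close>
  have "beta_N r N \<le> max ((1 + real r) / 2) \<bar>Sup ({}::real set)\<bar>" if N: "0 < N" for N
  proof (cases "proj_set r N = {}")
    case True
    have "beta_N r N = Sup ({}::real set) / real N" unfolding beta_N_def True by simp
    also have "\<dots> \<le> \<bar>Sup ({}::real set)\<bar> / real N"
      using N by (intro divide_right_mono) auto
    also have "\<dots> \<le> \<bar>Sup ({}::real set)\<bar>"
      using N by (intro divide_left_mono[of 1, simplified]) auto
    finally show ?thesis by linarith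
  next
    case False
    have "Sup ((\<lambda>Q. \<Sum>i<N. \<Sum>j<N. \<bar>Q $$ (i, j)\<bar>) ` proj_set r N) \<le> real N * (1 + real r) / 2"
      using False proj_set_abs_entry_sum_le[OF _ N] by (intro cSup_least) auto
    then have "beta_N r N \<le> (1 + real r) / 2"
      unfolding beta_N_def using N by (simp add: field_simps)
    then show ?thesis by linarith
  qed
  then show ?thesis by (intro bdd_aboveI) auto
qed

lemma proj_set_abs_entry_sum_le_beta:
  assumes Q: "Q \<in> proj_set r n" and r: "1 \<le> r" "r \<le> n"
  shows "(\<Sum>i<n. \<Sum>j<n. \<bar>Q $$ (i, j)\<bar>) \<le> beta r * real n"
proof -
  have n: "0 < n" using r by simp
  have "(\<Sum>i<n. \<Sum>j<n. \<bar>Q $$ (i, j)\<bar>) \<le> Sup ((\<lambda>Q. \<Sum>i<n. \<Sum>j<n. \<bar>Q $$ (i, j)\<bar>) ` proj_set r n)"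
    using Q proj_set_abs_entry_sum_le[OF _ n]
    by (intro cSup_upper bdd_aboveI[where M = "real n * (1 + real r) / 2"]) auto
  also have "\<dots> = beta_N r n * real n"
    unfolding beta_N_def using n by simp
  also have "beta_N r n \<le> beta r"
  proof -
    have "beta_N r ` {N. r \<le> N} \<subseteq> beta_N r ` {N. 0 < N}"
      using r by auto
    then show ?thesis
      unfolding beta_def using r bdd_above_mono[OF bdd_above_beta_N] by (intro cSup_upper) auto
  qed
  finally show ?thesis using n by simp
qed

theorem mainTheorem2:
  fixes n r :: nat and Q :: "real mat"
  assumes "1 \<le> r" and "r \<le> n" and "Q \<in> proj_set r n"
  shows "(\<Sum>i<n. \<Sum>j\<in>{i<..<n}. min (Q $$ (i, j)) 0) \<ge> - (beta r * real n / 4)"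
proof -
  have Q: "Q \<in> carrier_mat n n" and sym: "transpose_mat Q = Q" and idem: "Q * Q = Q"
    using assms(3) unfolding proj_set_def by auto
  have "(\<Sum>i<n. \<Sum>j<n. min (Q $$ (i, j)) 0) = 2 * (\<Sum>i<n. \<Sum>j\<in>{i<..<n}. min (Q $$ (i, j)) 0)"
  proof (rule sum_symmetric_eq_twice_strict_upper)
    show "min (Q $$ (i, j)) 0 = min (Q $$ (j, i)) 0" if "i < n" "j < n" for i j
      using that Q sym by (metis carrier_matD index_transpose_mat(1))
    show "min (Q $$ (i, i)) 0 = 0" if "i < n" for i
      using symmetric_idempotent_diag_eq_sum_squares[OF Q sym idem that] by (simp add: sum_nonneg)
  qed
  also have "(\<Sum>i<n. \<Sum>j<n. min (Q $$ (i, j)) 0)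
      = ((\<Sum>i<n. \<Sum>j<n. Q $$ (i, j)) - (\<Sum>i<n. \<Sum>j<n. \<bar>Q $$ (i, j)\<bar>)) / 2"
  proof -
    have min_zero: "min x 0 = (x - \<bar>x\<bar>) / 2" for x :: real
      by (cases "x \<le> 0") auto
    show ?thesis
      by (simp only: min_zero) (simp add: sum_subtractf sum_divide_distrib[symmetric])
  qed
  finally show ?thesis
    using symmetric_idempotent_entry_sum_nonneg[OF Q sym idem]
      proj_set_abs_entry_sum_le_beta[OF assms(3,1,2)] by argo
qed

end
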